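(* Let $a,b,c$ be positive real numbers and $n\geq1$ an integer. For $i=1,\dots,n$ define \[ f_i(x_1,\ldots,x_n)=\frac{a}{1-x_i}-\frac{b}{x_i}-\sum_{j\neq i}\frac{c}{x_i-x_j}, \] and let $U=\{(x_1,\ldots,x_n)\in\mathbb{R}^n:0<x_1<x_2<\cdots<x_n<1\}$. Let $v$ be a point of the boundary $\partial U$. Then for every sequence $(u_k)$ of points of $U$ converging to $v$, there exists $i\in\{1,\dots,n\}$ such that $\lim_{k\to\infty}|f_i(u_k)|=\infty$.
   Context: When $n=1$ the sum over $j\neq i$ is empty (zero). *)

theory Defs
  imports Complex_Main
begin

text \<open>Points of R^n are represented as functions nat => real whose coordinates
  1..n are the vector entries and which vanish outside {1..n}.\<close>

definition vecn :: "nat \<Rightarrow> (nat \<Rightarrow> real) set" where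
  "vecn n = {x. \<forall>i. i \<notin> {1..n} \<longrightarrow> x i = 0}"

definition fi :: "nat \<Rightarrow> real \<Rightarrow> real \<Rightarrow> real \<Rightarrow> nat \<Rightarrow> (nat \<Rightarrow> real) \<Rightarrow> real" where
  "fi n a b c i x = a / (1 - x i) - b / x i - (\<Sum>j\<in>{1..n} - {i}. c / (x i - x j))"

definition Uset :: "nat \<Rightarrow> (nat \<Rightarrow> real) set" where
  "Uset n = {x \<in> vecn n. 0 < x 1 \<and> (\<forall>i\<in>{1..<n}. x i < x (Suc i)) \<and> x n < 1}"

text \<open>Topological boundary of a set S \<subseteq> R^n, in the Euclidean topology of R^n
  (neighbourhood bases given by sup-norm boxes, which induce the same topology).\<close>
definition boundary_n :: "nat \<Rightarrow> (nat \<Rightarrow> real) set \<Rightarrow> (nat \<Rightarrow> real) set" where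
  "boundary_n n S = {v \<in> vecn n. \<forall>e>0.
      (\<exists>x\<in>S. \<forall>i\<in>{1..n}. \<bar>x i - v i\<bar> < e) \<and>
      (\<exists>x\<in>vecn n - S. \<forall>i\<in>{1..n}. \<bar>x i - v i\<bar> < e)}"

end

theory Submission
  imports Defs
begin

text \<open>The limit v lies in the closure \<open>0 \<le> v\<^sub>1 \<le> \<dots> \<le> v\<^sub>n \<le> 1\<close> of U but, U being open,
  not in U; so \<open>v\<^sub>n = 1\<close>, \<open>v\<^sub>1 = 0\<close>, or two consecutive coordinates coincide. Take p at the
  edge of the degenerate block: the first p with \<open>v\<^sub>p = 1\<close>, the last p with \<open>v\<^sub>p = 0\<close>, or the
  first p with \<open>v\<^sub>p = v\<^sub>p\<^sub>+\<^sub>1\<close>. Then one term of \<open>f\<^sub>p\<close>, namely \<open>a/(1 - x\<^sub>p)\<close>, \<open>b/x\<^sub>p\<close> or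
  \<open>c/(x\<^sub>p\<^sub>+\<^sub>1 - x\<^sub>p)\<close>, blows up; the terms with \<open>j > p\<close> (\<open>j < p\<close> when \<open>v\<^sub>p = 0\<close>) have
  the helpful sign, and everything else converges because \<open>v\<^sub>j \<noteq> v\<^sub>p\<close> on the other side of p.\<close>

lemma Uset_strict_mono:
  assumes "x \<in> Uset n" "1 \<le> i" "i < j" "j \<le> n"
  shows "x i < x j"
proof -
  have gap: "x m < x (Suc m)" if "1 \<le> m" "m < n" for m
    using assms(1) that by (auto simp: Uset_def)
  from \<open>i < j\<close> have "Suc i \<le> j" by simp
  then show ?thesis
  proof (induction rule: dec_induct)
    case base
    then show ?case using gap assms by simp
  next
    case (step m)
    then show ?case using gap[of m] assms by simp
  qed
qed

lemma Uset_mono: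
  assumes "x \<in> Uset n" "1 \<le> i" "i \<le> j" "j \<le> n"
  shows "x i \<le> x j"
proof (cases "i = j")
  case False
  then show ?thesis using Uset_strict_mono[OF assms(1,2) _ assms(4)] assms(3) by simp
qed simp

lemma Uset_bounds:
  assumes "x \<in> Uset n" "i \<in> {1..n}"
  shows "0 < x i" "x i < 1"
proof -
  have "0 < x 1" "x n < 1" using assms(1) by (auto simp: Uset_def)
  moreover have "x 1 \<le> x i" "x i \<le> x n" using Uset_mono[OF assms(1)] assms(2) by auto
  ultimately show "0 < x i" "x i < 1" by linarith+
qed

lemma Uset_disjoint_boundary:
  assumes "x \<in> Uset n"
  shows "x \<notin> boundary_n n (Uset n)"
proof
  assume "x \<in> boundary_n n (Uset n)"
  have "1 \<le> n"
    using assms by (cases n) (auto simp: Uset_def vecn_def)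
  define E where "E = {x 1, 1 - x n} \<union> (\<lambda>i. x (Suc i) - x i) ` {1..<n}"
  define e where "e = Min E / 2"
  have "finite E" by (simp add: E_def)
  moreover have "0 < Min E"
    using \<open>finite E\<close> assms by (subst Min_gr_iff) (auto simp: E_def Uset_def)
  ultimately have "0 < e" and gap: "\<And>t. t \<in> E \<Longrightarrow> 2 * e \<le> t"
    by (auto simp: e_def)
  then obtain y where y: "y \<in> vecn n - Uset n" "\<And>i. i \<in> {1..n} \<Longrightarrow> \<bar>y i - x i\<bar> < e"
    using \<open>x \<in> boundary_n n (Uset n)\<close> unfolding boundary_n_def by blast
  have "y \<in> Uset n"
    unfolding Uset_def
  proof (intro CollectI conjI ballI)
    show "y \<in> vecn n" using y(1) by simp
    show "0 < y 1" using y(2)[of 1] gap[of "x 1"] \<open>1 \<le> n\<close> by (auto simp: E_def)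
    show "y n < 1" using y(2)[of n] gap[of "1 - x n"] \<open>1 \<le> n\<close> by (auto simp: E_def)
    fix i assume "i \<in> {1..<n}"
    then show "y i < y (Suc i)"
      using y(2)[of i] y(2)[of "Suc i"] gap[of "x (Suc i) - x i"] by (auto simp: E_def)
  qed
  with y(1) show False by simp
qed

lemma fi_split:
  assumes "p \<in> {1..n}"
  shows "fi n a b c p x = a / (1 - x p) - b / x p - (\<Sum>j\<in>{1..<p}. c / (x p - x j))
           - (\<Sum>j\<in>{p<..n}. c / (x p - x j))"
proof -
  have "{1..n} - {p} = {1..<p} \<union> {p<..n}" using assms by auto
  moreover have "(\<Sum>j\<in>{1..<p} \<union> {p<..n}. c / (x p - x j))
      = (\<Sum>j\<in>{1..<p}. c / (x p - x j)) + (\<Sum>j\<in>{p<..n}. c / (x p - x j))"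
    by (rule sum.union_disjoint) auto
  ultimately show ?thesis unfolding fi_def by simp
qed

lemma Uset_sum_below_nonneg:
  assumes "x \<in> Uset n" "p \<in> {1..n}" "0 \<le> c"
  shows "0 \<le> (\<Sum>j\<in>{1..<p}. c / (x p - x j))"
proof (rule sum_nonneg)
  fix j assume "j \<in> {1..<p}"
  then have "x j < x p" using Uset_strict_mono[OF assms(1), of j p] assms(2) by auto
  then show "0 \<le> c / (x p - x j)" using assms(3) by simp
qed

lemma Uset_sum_above_nonpos:
  assumes "x \<in> Uset n" "p \<in> {1..n}" "p \<le> m" "0 \<le> c"
  shows "(\<Sum>j\<in>{m<..n}. c / (x p - x j)) \<le> 0"
proof (rule sum_nonpos)
  fix j assume "j \<in> {m<..n}"
  then have "x p < x j" using Uset_strict_mono[OF assms(1), of p j] assms(2,3) by auto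
  then show "c / (x p - x j) \<le> 0" using assms(4) by (simp add: divide_nonneg_neg)
qed

lemma filterlim_add_divide_at_top:
  fixes d g :: "'a \<Rightarrow> real"
  assumes "(g \<longlongrightarrow> L) F" "(d \<longlongrightarrow> 0) F" "eventually (\<lambda>k. 0 < d k) F" "0 < c"
  shows "filterlim (\<lambda>k. g k + c / d k) at_top F"
proof -
  have "filterlim (\<lambda>k. c * inverse (d k)) at_top F"
    using filterlim_tendsto_pos_mult_at_top[OF tendsto_const assms(4)
          filterlim_inverse_at_top[OF assms(2,3)]] .
  then show ?thesis
    using filterlim_tendsto_add_at_top[OF assms(1)] by (simp add: divide_inverse)
qed

lemma filterlim_abs_at_top_if_unbounded:
  fixes f :: "'a \<Rightarrow> real"
  assumes "filterlim f at_top F \<or> filterlim f at_bot F"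
  shows "filterlim (\<lambda>k. \<bar>f k\<bar>) at_top F"
  using assms
proof
  assume "filterlim f at_top F"
  then show ?thesis by (rule filterlim_compose[OF filterlim_abs_real])
next
  assume "filterlim f at_bot F"
  then have "filterlim (\<lambda>k. - f k) at_top F" by (simp add: filterlim_uminus_at_bot)
  then have "filterlim (\<lambda>k. \<bar>- f k\<bar>) at_top F" by (rule filterlim_compose[OF filterlim_abs_real])
  then show ?thesis by simp
qed

lemma first_index_of_value:
  fixes p :: nat
  assumes "1 \<le> p"
  obtains q where "1 \<le> q" "q \<le> p" "v q = v p" "\<And>j. 1 \<le> j \<Longrightarrow> j < q \<Longrightarrow> v j \<noteq> v p"
proof
  let ?q = "LEAST q. 1 \<le> q \<and> v q = v p"
  have "1 \<le> ?q \<and> v ?q = v p" by (rule LeastI[of _ p]) (use assms in simp)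
  then show "1 \<le> ?q" "v ?q = v p" by auto
  show "?q \<le> p" by (rule Least_le) (use assms in simp)
  show "v j \<noteq> v p" if "1 \<le> j" "j < ?q" for j
    using not_less_Least[OF that(2)] that(1) by blast
qed

lemma last_index_of_value:
  fixes p n :: nat
  assumes "p \<le> n"
  obtains q where "p \<le> q" "q \<le> n" "v q = v p" "\<And>j. q < j \<Longrightarrow> j \<le> n \<Longrightarrow> v j \<noteq> v p"
proof
  let ?q = "GREATEST q. q \<le> n \<and> v q = v p"
  have "?q \<le> n \<and> v ?q = v p" by (rule GreatestI_nat[of _ p n]) (use assms in auto)
  then show "?q \<le> n" "v ?q = v p" by auto
  show "p \<le> ?q" by (rule Greatest_le_nat[of _ p n]) (use assms in auto)
  show "v j \<noteq> v p" if "?q < j" "j \<le> n" for j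
    using Greatest_le_nat[of "\<lambda>q. q \<le> n \<and> v q = v p" j n] that by auto
qed

lemma first_collision_index:
  fixes v :: "nat \<Rightarrow> real"
  assumes "mono_on {1..n} v" "i \<in> {1..<n}" "v i = v (Suc i)"
  obtains p where "p \<in> {1..<n}" "v p = v (Suc p)" "\<And>j. j \<in> {1..<p} \<Longrightarrow> v j \<noteq> v p"
proof -
  obtain p where p: "1 \<le> p" "p \<le> i" "v p = v i" "\<And>j. 1 \<le> j \<Longrightarrow> j < p \<Longrightarrow> v j \<noteq> v i"
    using first_index_of_value[of i v] assms(2) by auto
  have "v p \<le> v (Suc p)" "v (Suc p) \<le> v (Suc i)"
    using p(1,2) assms(2) by (auto intro: mono_onD[OF assms(1)])
  then have "v p = v (Suc p)" using p(3) assms(3) by simp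
  show ?thesis
  proof (rule that)
    show "p \<in> {1..<n}" using p(1,2) assms(2) by auto
    show "v j \<noteq> v p" if "j \<in> {1..<p}" for j using p(3,4) that by auto
  qed fact
qed

context
  fixes n :: nat and u :: "nat \<Rightarrow> nat \<Rightarrow> real" and v :: "nat \<Rightarrow> real"
  assumes in_Uset: "\<And>k. u k \<in> Uset n"
    and converges: "\<And>i. i \<in> {1..n} \<Longrightarrow> (\<lambda>k. u k i) \<longlonglongrightarrow> v i"
begin

lemma limit_mono: "mono_on {1..n} v"
proof (rule mono_onI)
  fix i j assume "i \<in> {1..n}" "j \<in> {1..n}" "i \<le> j"
  then have "\<forall>k. u k i \<le> u k j"
    using Uset_mono[OF in_Uset] by simp
  then show "v i \<le> v j"
    using \<open>i \<in> {1..n}\<close> \<open>j \<in> {1..n}\<close> by (intro LIMSEQ_le[OF converges converges]) auto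
qed

lemma limit_bounds:
  assumes "i \<in> {1..n}"
  shows "0 \<le> v i" "v i \<le> 1"
proof -
  have "0 \<le> u k i" "u k i \<le> 1" for k
    using Uset_bounds[OF in_Uset assms] by (simp_all add: less_imp_le)
  then show "0 \<le> v i" "v i \<le> 1"
    using LIMSEQ_le_const[OF converges[OF assms]] LIMSEQ_le_const2[OF converges[OF assms]]
    by blast+
qed

lemma limit_outside_Uset_cases:
  assumes "v \<in> vecn n" "v \<notin> Uset n" "1 \<le> n"
  shows "v n = 1 \<or> v 1 = 0 \<or> (0 < v 1 \<and> v n < 1 \<and> (\<exists>i\<in>{1..<n}. v i = v (Suc i)))"
proof (rule ccontr)
  assume contra: "\<not> ?thesis"
  have "0 \<le> v 1" "v n \<le> 1" using limit_bounds assms(3) by auto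
  with contra have ends: "0 < v 1" "v n < 1" by auto
  have "v i < v (Suc i)" if "i \<in> {1..<n}" for i
  proof -
    have "v i \<le> v (Suc i)" using that by (intro mono_onD[OF limit_mono]) auto
    moreover have "v i \<noteq> v (Suc i)" using contra ends that by blast
    ultimately show ?thesis by simp
  qed
  with ends assms(1) have "v \<in> Uset n" by (simp add: Uset_def)
  with assms(2) show False by simp
qed

lemma fi_tendsto_at_top_at_right_end:
  assumes "p \<in> {1..n}" "v p = 1" "\<And>j. j \<in> {1..<p} \<Longrightarrow> v j \<noteq> 1" "0 < a" "0 \<le> c"
  shows "filterlim (\<lambda>k. fi n a b c p (u k)) at_top sequentially"
proof (rule filterlim_at_top_mono)
  let ?g = "\<lambda>k. - b / u k p - (\<Sum>j\<in>{1..<p}. c / (u k p - u k j))"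
  have "?g \<longlonglongrightarrow> - b / v p - (\<Sum>j\<in>{1..<p}. c / (v p - v j))"
    using assms(1-3) by (intro tendsto_intros converges) auto
  moreover have "(\<lambda>k. 1 - u k p) \<longlonglongrightarrow> 0"
    using tendsto_diff[OF tendsto_const converges[OF assms(1)], of 1] assms(2) by simp
  moreover have "\<forall>\<^sub>F k in sequentially. 0 < 1 - u k p"
    using Uset_bounds(2)[OF in_Uset assms(1)] by simp
  ultimately show "filterlim (\<lambda>k. ?g k + a / (1 - u k p)) at_top sequentially"
    using assms(4) by (rule filterlim_add_divide_at_top)
  show "\<forall>\<^sub>F k in sequentially. ?g k + a / (1 - u k p) \<le> fi n a b c p (u k)"
    using Uset_sum_above_nonpos[OF in_Uset assms(1) order.refl assms(5)]
    by (simp add: fi_split[OF assms(1)])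
qed

lemma fi_tendsto_at_bot_at_left_end:
  assumes "p \<in> {1..n}" "v p = 0" "\<And>j. j \<in> {p<..n} \<Longrightarrow> v j \<noteq> 0" "0 < b" "0 \<le> c"
  shows "filterlim (\<lambda>k. fi n a b c p (u k)) at_bot sequentially"
  unfolding filterlim_uminus_at_bot
proof (rule filterlim_at_top_mono)
  let ?g = "\<lambda>k. - (a / (1 - u k p)) + (\<Sum>j\<in>{p<..n}. c / (u k p - u k j))"
  have "?g \<longlonglongrightarrow> - (a / (1 - v p)) + (\<Sum>j\<in>{p<..n}. c / (v p - v j))"
    using assms(1-3) by (intro tendsto_intros converges) auto
  moreover have "(\<lambda>k. u k p) \<longlonglongrightarrow> 0"
    using converges[OF assms(1)] assms(2) by simp
  moreover have "\<forall>\<^sub>F k in sequentially. 0 < u k p"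
    using Uset_bounds(1)[OF in_Uset assms(1)] by simp
  ultimately show "filterlim (\<lambda>k. ?g k + b / u k p) at_top sequentially"
    using assms(4) by (rule filterlim_add_divide_at_top)
  show "\<forall>\<^sub>F k in sequentially. ?g k + b / u k p \<le> - fi n a b c p (u k)"
    using Uset_sum_below_nonneg[OF in_Uset assms(1) assms(5)]
    by (simp add: fi_split[OF assms(1)])
qed

lemma fi_tendsto_at_top_at_collision:
  assumes "p \<in> {1..<n}" "v p = v (Suc p)" "\<And>j. j \<in> {1..<p} \<Longrightarrow> v j \<noteq> v p"
    and "0 < v 1" "v n < 1" "0 < c"
  shows "filterlim (\<lambda>k. fi n a b c p (u k)) at_top sequentially"
proof (rule filterlim_at_top_mono)
  have p: "p \<in> {1..n}" "Suc p \<in> {1..n}" using assms(1) by auto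
  have "v 1 \<le> v p" "v p \<le> v n" using p by (auto intro!: mono_onD[OF limit_mono])
  then have "0 < v p" "v p < 1" using assms(4,5) by auto
  have separated: "v p - v j \<noteq> 0" if "j \<in> {1..<p}" for j
    using assms(3)[OF that] by simp
  let ?g = "\<lambda>k. a / (1 - u k p) - b / u k p - (\<Sum>j\<in>{1..<p}. c / (u k p - u k j))"
  have "?g \<longlonglongrightarrow> a / (1 - v p) - b / v p - (\<Sum>j\<in>{1..<p}. c / (v p - v j))"
    using separated \<open>0 < v p\<close> \<open>v p < 1\<close> p by (intro tendsto_intros converges) auto
  moreover have "(\<lambda>k. u k (Suc p) - u k p) \<longlonglongrightarrow> 0"
    using tendsto_diff[OF converges[OF p(2)] converges[OF p(1)]] assms(2) by simp
  moreover have "\<forall>\<^sub>F k in sequentially. 0 < u k (Suc p) - u k p"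
    using Uset_strict_mono[OF in_Uset, of p "Suc p"] p by simp
  ultimately show "filterlim (\<lambda>k. ?g k + c / (u k (Suc p) - u k p)) at_top sequentially"
    using assms(6) by (rule filterlim_add_divide_at_top)
  have "?g k + c / (u k (Suc p) - u k p) \<le> fi n a b c p (u k)" for k
  proof -
    have "{p<..n} = insert (Suc p) {Suc p<..n}" using assms(1) by auto
    then have "(\<Sum>j\<in>{p<..n}. c / (u k p - u k j))
        = c / (u k p - u k (Suc p)) + (\<Sum>j\<in>{Suc p<..n}. c / (u k p - u k j))"
      by simp
    moreover have "c / (u k p - u k (Suc p)) = - (c / (u k (Suc p) - u k p))"
      by (metis minus_diff_eq minus_divide_right)
    moreover note Uset_sum_above_nonpos[OF in_Uset p(1), of "Suc p" c] assms(6)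
    ultimately show ?thesis unfolding fi_split[OF p(1)] by simp
  qed
  then show "\<forall>\<^sub>F k in sequentially. ?g k + c / (u k (Suc p) - u k p) \<le> fi n a b c p (u k)"
    by simp
qed

end

theorem lemma6p1:
  fixes a b c :: real and n :: nat and v :: "nat \<Rightarrow> real" and u :: "nat \<Rightarrow> nat \<Rightarrow> real"
  assumes "a > 0" and "b > 0" and "c > 0" and "n \<ge> 1"
    and "v \<in> boundary_n n (Uset n)"
    and "\<And>k. u k \<in> Uset n"
    and "\<And>i. i \<in> {1..n} \<Longrightarrow> (\<lambda>k. u k i) \<longlonglongrightarrow> v i"
  shows "\<exists>i\<in>{1..n}. filterlim (\<lambda>k. \<bar>fi n a b c i (u k)\<bar>) at_top sequentially"
proof -
  note limit = assms(6,7)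
  have "v \<in> vecn n" "v \<notin> Uset n"
    using assms(5) Uset_disjoint_boundary unfolding boundary_n_def by blast+
  then consider "v n = 1" | "v 1 = 0" | "0 < v 1" "v n < 1" "\<exists>i\<in>{1..<n}. v i = v (Suc i)"
    using limit_outside_Uset_cases[OF limit _ _ assms(4)] by blast
  then obtain p where "p \<in> {1..n}" and "filterlim (\<lambda>k. fi n a b c p (u k)) at_top sequentially \<or>
                                    filterlim (\<lambda>k. fi n a b c p (u k)) at_bot sequentially"
  proof cases
    case 1
    obtain p where "1 \<le> p" "p \<le> n" "v p = v n" "\<And>j. 1 \<le> j \<Longrightarrow> j < p \<Longrightarrow> v j \<noteq> v n"
      using first_index_of_value[of n v] assms(4) by blast
    with 1 assms(1,3) show ?thesis
      using that[of p] fi_tendsto_at_top_at_right_end[OF limit, of p a c b] by simp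
  next
    case 2
    obtain p where "1 \<le> p" "p \<le> n" "v p = v 1" "\<And>j. p < j \<Longrightarrow> j \<le> n \<Longrightarrow> v j \<noteq> v 1"
      using last_index_of_value[of 1 n v] assms(4) by blast
    with 2 assms(2,3) show ?thesis
      using that[of p] fi_tendsto_at_bot_at_left_end[OF limit, of p b c a] by simp
  next
    case 3
    then obtain p where "p \<in> {1..<n}" "v p = v (Suc p)" "\<And>j. j \<in> {1..<p} \<Longrightarrow> v j \<noteq> v p"
      using first_collision_index[OF limit_mono[OF limit]] by blast
    with 3 assms(3) show ?thesis
      using that[of p] fi_tendsto_at_top_at_collision[OF limit, of p c a b] by simp
  qed
  then show ?thesis using filterlim_abs_at_top_if_unbounded by blast
qed

end
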